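(* Let $e$ be an edge of a graph $G$. Then $\operatorname{reg}(G/e)\le\operatorname{reg}(G)\le\operatorname{reg}(G/e)+1$. Consequently $\operatorname{reg}(H)\le\operatorname{reg}(G)$ whenever $H$ is obtained from $G$ by a sequence of edge contractions.
   Context: For an edge $e=xy$, $G/e$ is the simple graph obtained from $G-\{x,y\}$ by adding a new vertex $w$ adjacent to every vertex of $(N_G(x)\cup N_G(y))\setminus\{x,y\}$. $\operatorname{reg}(G)=\max\{j\ge0:\widetilde H_{j-1}(\operatorname{Ind}(G[S]);\Bbbk)\neq0\text{ for some }S\subseteq V(G)\}$ over a field $\Bbbk$, $\operatorname{Ind}$ the independence complex. *)

theory Defs
  imports Main
begin

type_synonym 'a graph = "'a set \<times> 'a set set"

definition simple_graph :: "'a graph \<Rightarrow> bool" where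
  "simple_graph G \<longleftrightarrow> finite (fst G) \<and>
     (\<forall>e\<in>snd G. card e = 2 \<and> e \<subseteq> fst G)"

definition nbhd :: "'a graph \<Rightarrow> 'a \<Rightarrow> 'a set" where
  "nbhd G x = {z \<in> fst G. {x, z} \<in> snd G}"

text \<open>The new vertex w is a
  parameter; it must not clash with the surviving vertices.\<close>

definition contract :: "'a graph \<Rightarrow> 'a \<Rightarrow> 'a \<Rightarrow> 'a \<Rightarrow> 'a graph" where
  "contract G x y w =
     (insert w (fst G - {x, y}),
      {e \<in> snd G. x \<notin> e \<and> y \<notin> e} \<union>
      {{w, z} | z. z \<in> (nbhd G x \<union> nbhd G y) - {x, y}})"

definition valid_contraction :: "'a graph \<Rightarrow> 'a \<Rightarrow> 'a \<Rightarrow> 'a \<Rightarrow> bool" where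
  "valid_contraction G x y w \<longleftrightarrow> {x, y} \<in> snd G \<and> x \<noteq> y \<and> w \<notin> fst G - {x, y}"

inductive contr_seq :: "'a graph \<Rightarrow> 'a graph \<Rightarrow> bool" where
  refl: "contr_seq G G"
| step: "contr_seq G H \<Longrightarrow> valid_contraction H x y w \<Longrightarrow> contr_seq G (contract H x y w)"

definition ind_complex :: "'a graph \<Rightarrow> 'a set \<Rightarrow> 'a set set" where
  "ind_complex G S = {\<sigma>. \<sigma> \<subseteq> S \<and> (\<forall>e\<in>snd G. \<not> e \<subseteq> \<sigma>)}"

text \<open>Augmented simplicial chain complex over a field 'k, oriented by the linear
  order on vertices.  A q-chain is a coefficient function supported on faces with
  q vertices (so the empty face sits in degree q = 0, i.e. dimension -1).\<close>

definition is_chain :: "'a set set \<Rightarrow> nat \<Rightarrow> ('a set \<Rightarrow> 'k::field) \<Rightarrow> bool" where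
  "is_chain \<Delta> q c \<longleftrightarrow> (\<forall>\<sigma>. c \<sigma> \<noteq> 0 \<longrightarrow> \<sigma> \<in> \<Delta> \<and> card \<sigma> = q)"

definition bd :: "'a::linorder set set \<Rightarrow> ('a set \<Rightarrow> 'k::field) \<Rightarrow> 'a set \<Rightarrow> 'k" where
  "bd \<Delta> c \<tau> = (\<Sum>v\<in>\<Union>\<Delta> - \<tau>. (-1) ^ card {u\<in>\<tau>. u < v} * c (insert v \<tau>))"

text \<open>red_hom_nonzero K \<Delta> q : the reduced homology group of \<Delta> in dimension q-1
  with coefficients in the field 'k is nonzero.\<close>

definition red_hom_nonzero :: "'k::field itself \<Rightarrow> 'a::linorder set set \<Rightarrow> nat \<Rightarrow> bool" where
  "red_hom_nonzero K \<Delta> q \<longleftrightarrow>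
     (\<exists>c :: 'a set \<Rightarrow> 'k. is_chain \<Delta> q c \<and> bd \<Delta> c = (\<lambda>_. 0) \<and>
        \<not> (\<exists>b :: 'a set \<Rightarrow> 'k. is_chain \<Delta> (Suc q) b \<and> bd \<Delta> b = c))"

definition reg :: "'k::field itself \<Rightarrow> 'a::linorder graph \<Rightarrow> nat" where
  "reg K G = Max {j. \<exists>S\<subseteq>fst G. red_hom_nonzero K (ind_complex G S) j}"

end

theory Submission
  imports Defs
begin

text \<open>Write \<open>G/e\<close> for the contraction of the edge \<open>e = xy\<close> with new vertex \<open>w\<close>. Every induced
  subgraph of \<open>G/e\<close> that avoids \<open>w\<close> is an induced subgraph of \<open>G\<close>. For one that contains \<open>w\<close>,
  the deletion/link long exact sequence says that a nonzero homology class of \<open>Ind\<close> comes from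
  the deletion of \<open>w\<close> (again an induced subgraph of \<open>G\<close>) or, one degree lower, from the link of
  \<open>w\<close>, which is \<open>Ind(G[W])\<close> for a set \<open>W\<close> avoiding \<open>N[x] \<union> N[y]\<close>. In \<open>G[W \<union> {x,y}]\<close> the
  vertices \<open>x\<close> and \<open>y\<close> have the same link \<open>Ind(G[W])\<close>, so that independence complex is its
  suspension and recovers the lost degree. This gives \<open>reg(G/e) \<le> reg(G)\<close>. Conversely,
  applying the same exact sequence at \<open>x\<close> and then at \<open>y\<close> reduces every induced subgraph of \<open>G\<close>
  to induced subgraphs avoiding \<open>x\<close> and \<open>y\<close>, at the cost of at most one degree, which gives
  \<open>reg(G) \<le> reg(G/e) + 1\<close>.\<close>

section \<open>Simplicial chains on a fixed ground set\<close>

definition incidence_sign :: "'a::linorder set \<Rightarrow> 'a \<Rightarrow> 'k::field" where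
  "incidence_sign \<tau> v = (-1) ^ card {u\<in>\<tau>. u < v}"

text \<open>The boundary \<open>bd \<Delta>\<close> of the definitions ranges over the vertices of \<open>\<Delta>\<close>; ranging over a
  fixed finite ground set \<open>V\<close> instead lets one boundary map serve a complex and all its
  deletions, links and cones at once.\<close>

definition bdry :: "'a::linorder set \<Rightarrow> ('a set \<Rightarrow> 'k::field) \<Rightarrow> 'a set \<Rightarrow> 'k" where
  "bdry V c \<tau> = (\<Sum>v\<in>V - \<tau>. incidence_sign \<tau> v * c (insert v \<tau>))"

definition link_chain :: "'a::linorder \<Rightarrow> ('a set \<Rightarrow> 'k::field) \<Rightarrow> 'a set \<Rightarrow> 'k" where
  "link_chain v c \<sigma> = (if v \<in> \<sigma> then 0 else incidence_sign \<sigma> v * c (insert v \<sigma>))"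

definition cone_chain :: "'a::linorder \<Rightarrow> ('a set \<Rightarrow> 'k::field) \<Rightarrow> 'a set \<Rightarrow> 'k" where
  "cone_chain v c \<sigma> = (if v \<in> \<sigma> then incidence_sign (\<sigma> - {v}) v * c (\<sigma> - {v}) else 0)"

lemma incidence_sign_insert:
  assumes "finite \<tau>" "u \<notin> \<tau>"
  shows "(incidence_sign (insert u \<tau>) v :: 'k::field) =
    (if u < v then - incidence_sign \<tau> v else incidence_sign \<tau> v)"
proof (cases "u < v")
  case True
  have "{w\<in>insert u \<tau>. w < v} = insert u {w\<in>\<tau>. w < v}" using True by auto
  moreover have "card (insert u {w\<in>\<tau>. w < v}) = Suc (card {w\<in>\<tau>. w < v})"
    using assms by auto
  ultimately show ?thesis using True by (simp add: incidence_sign_def)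
next
  case False
  have "{w\<in>insert u \<tau>. w < v} = {w\<in>\<tau>. w < v}" using False by auto
  then show ?thesis using False by (simp add: incidence_sign_def)
qed

lemma incidence_sign_square: "(incidence_sign \<tau> v :: 'k::field) * incidence_sign \<tau> v = 1"
  by (simp add: incidence_sign_def power_mult_distrib[symmetric])

lemma sum_sum_antisym_eq_0:
  fixes F :: "'a::linorder \<Rightarrow> 'a \<Rightarrow> 'b::ab_group_add"
  assumes "finite A" and "\<And>u u'. u \<in> A \<Longrightarrow> u' \<in> A \<Longrightarrow> u \<noteq> u' \<Longrightarrow> F u' u = - F u u'"
  shows "(\<Sum>u\<in>A. \<Sum>u'\<in>A - {u}. F u u') = 0"
proof -
  define L where "L u u' = (if u' < u then F u u' else 0)" for u u'
  define R where "R u u' = (if u < u' then F u u' else 0)" for u u'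
  have split: "(\<Sum>u'\<in>A - {u}. F u u') = (\<Sum>u'\<in>A. L u u') + (\<Sum>u'\<in>A. R u u')" for u
  proof -
    have "(\<Sum>u'\<in>A - {u}. F u u') = (\<Sum>u'\<in>A. if u' = u then 0 else F u u')"
      using assms(1) by (simp add: sum.If_cases Diff_eq Int_def)
    also have "\<dots> = (\<Sum>u'\<in>A. L u u' + R u u')"
      by (rule sum.cong) (auto simp: L_def R_def)
    finally show ?thesis by (simp add: sum.distrib)
  qed
  have "(\<Sum>u\<in>A. \<Sum>u'\<in>A. L u u') = (\<Sum>u\<in>A. \<Sum>u'\<in>A. L u' u)"
    by (rule sum.swap)
  also have "\<dots> = (\<Sum>u\<in>A. \<Sum>u'\<in>A. - R u u')"
  proof (intro sum.cong HOL.refl)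
    fix u u' assume "u \<in> A" "u' \<in> A"
    then show "L u' u = - R u u'"
      using assms(2)[of u u'] by (cases "u < u'") (auto simp: L_def R_def)
  qed
  finally show ?thesis by (simp add: split sum.distrib sum_negf)
qed

lemma bdry_bdry_apply:
  assumes "finite V" and "\<tau> \<subseteq> V"
  shows "bdry V (bdry V c) \<tau> = (0::'k::field)"
proof -
  have ft: "finite \<tau>" using assms finite_subset by blast
  define F where "F u u' = (incidence_sign \<tau> u * incidence_sign (insert u \<tau>) u' *
      c (insert u' (insert u \<tau>)) :: 'k)" for u u'
  have "bdry V (bdry V c) \<tau> = (\<Sum>u\<in>V - \<tau>. \<Sum>u'\<in>V - \<tau> - {u}. F u u')"
    unfolding bdry_def F_def
  proof (rule sum.cong[OF HOL.refl])
    fix u assume "u \<in> V - \<tau>"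
    have "V - insert u \<tau> = V - \<tau> - {u}" by auto
    then show "incidence_sign \<tau> u * (\<Sum>v\<in>V - insert u \<tau>. incidence_sign (insert u \<tau>) v * c (insert v (insert u \<tau>))) =
        (\<Sum>u'\<in>V - \<tau> - {u}. incidence_sign \<tau> u * incidence_sign (insert u \<tau>) u' * c (insert u' (insert u \<tau>)))"
      by (simp add: sum_distrib_left mult.assoc)
  qed
  also have "\<dots> = 0"
  proof (rule sum_sum_antisym_eq_0)
    show "finite (V - \<tau>)" using assms by simp
    fix u u' assume "u \<in> V - \<tau>" "u' \<in> V - \<tau>" "u \<noteq> u'"
    then show "F u' u = - F u u'"
      unfolding F_def by (cases "u < u'") (auto simp: incidence_sign_insert[OF ft] insert_commute)
  qed
  finally show ?thesis .
qed

lemma bdry_eq_0_outside: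
  assumes "\<forall>\<sigma>. c \<sigma> \<noteq> 0 \<longrightarrow> \<sigma> \<subseteq> V" and "\<not> \<tau> \<subseteq> V"
  shows "bdry V c \<tau> = 0"
  unfolding bdry_def
proof (intro sum.neutral ballI)
  fix u assume "u \<in> V - \<tau>"
  then have "c (insert u \<tau>) = 0" using assms by blast
  then show "incidence_sign \<tau> u * c (insert u \<tau>) = 0" by simp
qed

lemma bdry_bdry:
  fixes c :: "'a::linorder set \<Rightarrow> 'k::field"
  assumes fV: "finite V" and cV: "\<forall>\<sigma>. c \<sigma> \<noteq> 0 \<longrightarrow> \<sigma> \<subseteq> V"
  shows "bdry V (bdry V c) = (\<lambda>_. 0)"
proof
  fix \<tau>
  show "bdry V (bdry V c) \<tau> = 0"
  proof (cases "\<tau> \<subseteq> V")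
    case True
    then show ?thesis by (rule bdry_bdry_apply[OF fV])
  next
    case False
    have "\<forall>\<sigma>. bdry V c \<sigma> \<noteq> 0 \<longrightarrow> \<sigma> \<subseteq> V"
      using bdry_eq_0_outside[OF cV] by blast
    then show ?thesis using bdry_eq_0_outside False by blast
  qed
qed

lemma bdry_add: "bdry V (\<lambda>\<sigma>. a \<sigma> + b \<sigma>) = (\<lambda>\<tau>. bdry V a \<tau> + bdry V b \<tau>)"
  by (simp add: fun_eq_iff bdry_def sum.distrib algebra_simps)

lemma bdry_diff: "bdry V (\<lambda>\<sigma>. a \<sigma> - b \<sigma>) = (\<lambda>\<tau>. bdry V a \<tau> - bdry V b \<tau>)"
  by (simp add: fun_eq_iff bdry_def sum_subtractf algebra_simps)

lemma link_chain_diff: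
  "link_chain v (\<lambda>\<sigma>. a \<sigma> - b \<sigma>) = (\<lambda>\<tau>. link_chain v a \<tau> - link_chain v b \<tau>)"
  by (simp add: fun_eq_iff link_chain_def algebra_simps)

lemma bdry_insert:
  fixes c :: "'a::linorder set \<Rightarrow> 'k::field"
  assumes "finite V" and "\<tau> \<subseteq> V" and "v \<notin> \<tau>"
  shows "bdry V c (insert v \<tau>) = - incidence_sign \<tau> v * bdry V (link_chain v c) \<tau>"
proof -
  have ft: "finite \<tau>" using assms finite_subset by blast
  have "bdry V (link_chain v c) \<tau> =
      (\<Sum>u\<in>V - \<tau> - {v}. incidence_sign \<tau> u * link_chain v c (insert u \<tau>))"
    unfolding bdry_def using assms by (intro sum.mono_neutral_right) (auto simp: link_chain_def)
  also have "\<dots> = (\<Sum>u\<in>V - insert v \<tau>. incidence_sign \<tau> u *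
      (incidence_sign (insert u \<tau>) v * c (insert u (insert v \<tau>))))"
    using assms(3) by (intro sum.cong) (auto simp: link_chain_def insert_commute)
  finally have link: "bdry V (link_chain v c) \<tau> = \<dots>" .
  have "- incidence_sign \<tau> v * bdry V (link_chain v c) \<tau> =
      (\<Sum>u\<in>V - insert v \<tau>. incidence_sign (insert v \<tau>) u * c (insert u (insert v \<tau>)))"
    unfolding link sum_distrib_left
  proof (rule sum.cong[OF HOL.refl])
    fix u assume "u \<in> V - insert v \<tau>"
    then have "u \<notin> \<tau>" "u \<noteq> v" by auto
    have "(incidence_sign \<tau> v :: 'k) * incidence_sign \<tau> v = 1" by (rule incidence_sign_square)
    then show "- incidence_sign \<tau> v * (incidence_sign \<tau> u *
        (incidence_sign (insert u \<tau>) v * c (insert u (insert v \<tau>)))) =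
        incidence_sign (insert v \<tau>) u * c (insert u (insert v \<tau>))"
      using \<open>u \<notin> \<tau>\<close> \<open>u \<noteq> v\<close> assms(3)
      by (cases "u < v") (auto simp: incidence_sign_insert[OF ft] algebra_simps)
  qed
  then show ?thesis by (simp add: bdry_def)
qed

lemma bdry_link_chain:
  fixes c :: "'a::linorder set \<Rightarrow> 'k::field"
  assumes fV: "finite V" and cV: "\<forall>\<sigma>. c \<sigma> \<noteq> 0 \<longrightarrow> \<sigma> \<subseteq> V"
  shows "bdry V (link_chain v c) = (\<lambda>\<tau>. - link_chain v (bdry V c) \<tau>)"
proof
  fix \<tau>
  have link_V: "\<forall>\<sigma>. link_chain v c \<sigma> \<noteq> 0 \<longrightarrow> \<sigma> \<subseteq> V"
    using cV by (auto simp: link_chain_def)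
  show "bdry V (link_chain v c) \<tau> = - link_chain v (bdry V c) \<tau>"
  proof (cases "\<tau> \<subseteq> V")
    case False
    then have "\<not> insert v \<tau> \<subseteq> V" by blast
    then have "bdry V c (insert v \<tau>) = 0" by (rule bdry_eq_0_outside[OF cV])
    then have "link_chain v (bdry V c) \<tau> = 0" by (simp add: link_chain_def)
    then show ?thesis using bdry_eq_0_outside[OF link_V False] by simp
  next
    case True
    show ?thesis
    proof (cases "v \<in> \<tau>")
      case True
      then show ?thesis unfolding bdry_def by (simp add: link_chain_def)
    next
      case False
      then show ?thesis
        using bdry_insert[OF fV \<open>\<tau> \<subseteq> V\<close> False, of c]
        by (simp add: link_chain_def mult.assoc[symmetric] incidence_sign_square)
    qed
  qed
qed

lemma link_chain_cone_chain:
  fixes c :: "'a::linorder set \<Rightarrow> 'k::field"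
  assumes "\<forall>\<sigma>. c \<sigma> \<noteq> 0 \<longrightarrow> v \<notin> \<sigma>"
  shows "link_chain v (cone_chain v c) = c"
proof
  fix \<sigma>
  show "link_chain v (cone_chain v c) \<sigma> = c \<sigma>"
  proof (cases "v \<in> \<sigma>")
    case True
    then show ?thesis using assms by (auto simp: link_chain_def)
  next
    case False
    then have "insert v \<sigma> - {v} = \<sigma>" by auto
    then show ?thesis
      using False by (simp add: link_chain_def cone_chain_def mult.assoc[symmetric] incidence_sign_square)
  qed
qed

lemma link_chain_cone_chain_other:
  fixes c :: "'a::linorder set \<Rightarrow> 'k::field"
  assumes "x \<noteq> y" and "\<forall>\<sigma>. c \<sigma> \<noteq> 0 \<longrightarrow> x \<notin> \<sigma>"
  shows "link_chain x (cone_chain y c) = (\<lambda>_. 0)"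
  using assms by (auto simp: fun_eq_iff link_chain_def cone_chain_def)

lemma bdry_cone_chain:
  fixes c :: "'a::linorder set \<Rightarrow> 'k::field"
  assumes fV: "finite V" and vV: "v \<in> V" and "\<tau> \<subseteq> V" and vc: "\<forall>\<sigma>. c \<sigma> \<noteq> 0 \<longrightarrow> v \<notin> \<sigma>"
  shows "bdry V (cone_chain v c) \<tau> =
    (if v \<in> \<tau> then - incidence_sign (\<tau> - {v}) v * bdry V c (\<tau> - {v}) else c \<tau>)"
proof (cases "v \<in> \<tau>")
  case True
  obtain \<rho> where \<tau>: "\<tau> = insert v \<rho>" and "v \<notin> \<rho>"
    using True by (metis Diff_iff insert_Diff singletonI)
  then have \<rho>: "\<tau> - {v} = \<rho>" "\<rho> \<subseteq> V" using \<open>\<tau> \<subseteq> V\<close> by auto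
  have "bdry V (cone_chain v c) (insert v \<rho>) = - incidence_sign \<rho> v * bdry V c \<rho>"
    using bdry_insert[OF fV \<open>\<rho> \<subseteq> V\<close> \<open>v \<notin> \<rho>\<close>, of "cone_chain v c"]
    by (simp add: link_chain_cone_chain[OF vc])
  then show ?thesis using True unfolding \<rho>(1) unfolding \<tau> by simp
next
  case False
  have "bdry V (cone_chain v c) \<tau> = (\<Sum>u\<in>V - \<tau>. if u = v then c \<tau> else 0)"
    unfolding bdry_def
  proof (rule sum.cong[OF HOL.refl])
    fix u assume "u \<in> V - \<tau>"
    have "insert v \<tau> - {v} = \<tau>" using False by auto
    then show "incidence_sign \<tau> u * cone_chain v c (insert u \<tau>) = (if u = v then c \<tau> else 0)"
      using False \<open>u \<in> V - \<tau>\<close> by (auto simp: cone_chain_def mult.assoc[symmetric] incidence_sign_square)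
  qed
  also have "\<dots> = c \<tau>"
    using False vV fV by (simp add: sum.delta)
  finally show ?thesis using False by simp
qed

lemma bdry_cone_chain_cycle:
  fixes c :: "'a::linorder set \<Rightarrow> 'k::field"
  assumes fV: "finite V" and vV: "v \<in> V" and vc: "\<forall>\<sigma>. c \<sigma> \<noteq> 0 \<longrightarrow> v \<notin> \<sigma>"
    and cV: "\<forall>\<sigma>. c \<sigma> \<noteq> 0 \<longrightarrow> \<sigma> \<subseteq> V" and cycle: "bdry V c = (\<lambda>_. 0)"
  shows "bdry V (cone_chain v c) = c"
proof
  fix \<tau>
  have cone_V: "\<forall>\<sigma>. cone_chain v c \<sigma> \<noteq> 0 \<longrightarrow> \<sigma> \<subseteq> V"
  proof (intro allI impI)
    fix \<sigma> assume "cone_chain v c \<sigma> \<noteq> 0"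
    then have "v \<in> \<sigma>" "c (\<sigma> - {v}) \<noteq> 0" by (auto simp: cone_chain_def split: if_splits)
    then show "\<sigma> \<subseteq> V" using cV vV by blast
  qed
  show "bdry V (cone_chain v c) \<tau> = c \<tau>"
  proof (cases "\<tau> \<subseteq> V")
    case False
    then have "c \<tau> = 0" using cV by blast
    then show ?thesis using bdry_eq_0_outside[OF cone_V False] by simp
  next
    case True
    have "bdry V c (\<tau> - {v}) = 0" using cycle by simp
    then show ?thesis
      using bdry_cone_chain[OF fV vV True vc] vc by (cases "v \<in> \<tau>") auto
  qed
qed

section \<open>Deletion, link and suspension\<close>

definition deletion :: "'a set set \<Rightarrow> 'a \<Rightarrow> 'a set set" where
  "deletion \<Delta> v = {\<sigma>\<in>\<Delta>. v \<notin> \<sigma>}"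

definition link :: "'a set set \<Rightarrow> 'a \<Rightarrow> 'a set set" where
  "link \<Delta> v = {\<sigma>. v \<notin> \<sigma> \<and> insert v \<sigma> \<in> \<Delta>}"

definition red_hom_nonzero_on :: "'k::field itself \<Rightarrow> 'a::linorder set \<Rightarrow> 'a set set \<Rightarrow> nat \<Rightarrow> bool" where
  "red_hom_nonzero_on K V \<Delta> q \<longleftrightarrow>
     (\<exists>c :: 'a set \<Rightarrow> 'k. is_chain \<Delta> q c \<and> bdry V c = (\<lambda>_. 0) \<and>
        \<not> (\<exists>b :: 'a set \<Rightarrow> 'k. is_chain \<Delta> (Suc q) b \<and> bdry V b = c))"

lemma is_chain_support:
  "is_chain \<Delta> q c \<Longrightarrow> \<Delta> \<subseteq> Pow V \<Longrightarrow> \<forall>\<sigma>. c \<sigma> \<noteq> 0 \<longrightarrow> \<sigma> \<subseteq> V"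
  unfolding is_chain_def by auto

lemma is_chain_mono: "is_chain \<Delta> q c \<Longrightarrow> \<Delta> \<subseteq> \<Delta>' \<Longrightarrow> is_chain \<Delta>' q c"
  unfolding is_chain_def by blast

lemma is_chain_diff:
  assumes "is_chain \<Delta> q a" and "is_chain \<Delta> q b"
  shows "is_chain \<Delta> q (\<lambda>\<sigma>. a \<sigma> - b \<sigma>)"
  unfolding is_chain_def
proof (intro allI impI)
  fix \<sigma> assume "a \<sigma> - b \<sigma> \<noteq> 0"
  then have "a \<sigma> \<noteq> 0 \<or> b \<sigma> \<noteq> 0" by auto
  then show "\<sigma> \<in> \<Delta> \<and> card \<sigma> = q" using assms by (auto simp: is_chain_def)
qed

lemma is_chain_link_chain:
  assumes c: "is_chain \<Delta> (Suc q) c" and fin: "\<forall>\<sigma>\<in>\<Delta>. finite \<sigma>"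
  shows "is_chain (link \<Delta> v) q (link_chain v c)"
  unfolding is_chain_def
proof (intro allI impI)
  fix \<sigma> assume "link_chain v c \<sigma> \<noteq> 0"
  then have "v \<notin> \<sigma>" "c (insert v \<sigma>) \<noteq> 0" by (auto simp: link_chain_def split: if_splits)
  then have "insert v \<sigma> \<in> \<Delta>" "card (insert v \<sigma>) = Suc q" using c by (auto simp: is_chain_def)
  then show "\<sigma> \<in> link \<Delta> v \<and> card \<sigma> = q"
    using \<open>v \<notin> \<sigma>\<close> fin by (auto simp: link_def)
qed

lemma is_chain_cone_chain:
  assumes c: "is_chain (link \<Delta> v) q c" and fin: "\<forall>\<sigma>\<in>\<Delta>. finite \<sigma>"
  shows "is_chain \<Delta> (Suc q) (cone_chain v c)"
  unfolding is_chain_def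
proof (intro allI impI)
  fix \<sigma> assume "cone_chain v c \<sigma> \<noteq> 0"
  then have "v \<in> \<sigma>" "c (\<sigma> - {v}) \<noteq> 0" by (auto simp: cone_chain_def split: if_splits)
  then have "\<sigma> - {v} \<in> link \<Delta> v" "card (\<sigma> - {v}) = q" using c by (auto simp: is_chain_def)
  then have "\<sigma> \<in> \<Delta>" using \<open>v \<in> \<sigma>\<close> by (auto simp: link_def insert_absorb)
  then show "\<sigma> \<in> \<Delta> \<and> card \<sigma> = Suc q"
    using fin \<open>v \<in> \<sigma>\<close> \<open>card (\<sigma> - {v}) = q\<close> by (metis card_Suc_Diff1)
qed

text \<open>The connecting step of the deletion/link exact sequence: the boundary of the cone over \<open>b\<close>
  cancels the faces of \<open>z\<close> through \<open>v\<close>.\<close>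

lemma is_chain_deletion_cycle_plus_cone:
  fixes z b :: "'a::linorder set \<Rightarrow> 'k::field"
  assumes fV: "finite V" and vV: "v \<in> V" and sub: "\<Delta> \<subseteq> Pow V"
    and closed: "\<forall>\<sigma>\<in>\<Delta>. \<forall>\<rho>\<subseteq>\<sigma>. \<rho> \<in> \<Delta>"
    and z: "is_chain \<Delta> (Suc p) z" and b: "is_chain (link \<Delta> v) (Suc p) b"
    and bz: "bdry V b = link_chain v z"
  shows "is_chain (deletion \<Delta> v) (Suc p) (\<lambda>\<sigma>. z \<sigma> + bdry V (cone_chain v b) \<sigma>)"
  unfolding is_chain_def
proof (intro allI impI)
  fix \<sigma> assume nz: "z \<sigma> + bdry V (cone_chain v b) \<sigma> \<noteq> 0"
  have fin: "\<forall>\<sigma>\<in>\<Delta>. finite \<sigma>" using sub fV finite_subset by blast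
  have bv: "\<forall>\<sigma>. b \<sigma> \<noteq> 0 \<longrightarrow> v \<notin> \<sigma>" using b by (auto simp: is_chain_def link_def)
  have coneV: "\<forall>\<sigma>. cone_chain v b \<sigma> \<noteq> 0 \<longrightarrow> \<sigma> \<subseteq> V"
    by (rule is_chain_support[OF is_chain_cone_chain[OF b fin] sub])
  have "\<sigma> \<subseteq> V"
  proof (rule ccontr)
    assume "\<not> \<sigma> \<subseteq> V"
    then have "bdry V (cone_chain v b) \<sigma> = 0" by (rule bdry_eq_0_outside[OF coneV])
    moreover have "z \<sigma> = 0" using \<open>\<not> \<sigma> \<subseteq> V\<close> is_chain_support[OF z sub] by blast
    ultimately show False using nz by simp
  qed
  note cone = bdry_cone_chain[OF fV vV this bv]
  show "\<sigma> \<in> deletion \<Delta> v \<and> card \<sigma> = Suc p"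
  proof (cases "v \<in> \<sigma>")
    case True
    then have "insert v (\<sigma> - {v}) = \<sigma>" by auto
    then have "z \<sigma> + bdry V (cone_chain v b) \<sigma> = 0"
      using cone True bz by (simp add: link_chain_def mult.assoc[symmetric] incidence_sign_square)
    with nz show ?thesis by contradiction
  next
    case False
    then have "z \<sigma> \<noteq> 0 \<or> b \<sigma> \<noteq> 0" using nz cone by auto
    then show ?thesis
    proof
      assume "z \<sigma> \<noteq> 0"
      then show ?thesis using z False by (auto simp: is_chain_def deletion_def)
    next
      assume "b \<sigma> \<noteq> 0"
      then have "\<sigma> \<in> link \<Delta> v" "card \<sigma> = Suc p" using b by (auto simp: is_chain_def)
      then have "\<sigma> \<in> \<Delta>" using closed by (auto simp: link_def)
      then show ?thesis using \<open>\<sigma> \<in> link \<Delta> v\<close> \<open>card \<sigma> = Suc p\<close>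
        by (simp add: link_def deletion_def)
    qed
  qed
qed

lemma red_hom_nonzero_on_deletion_or_link:
  fixes K :: "'k::field itself"
  assumes fV: "finite V" and vV: "v \<in> V" and sub: "\<Delta> \<subseteq> Pow V"
    and closed: "\<forall>\<sigma>\<in>\<Delta>. \<forall>\<rho>\<subseteq>\<sigma>. \<rho> \<in> \<Delta>"
    and H: "red_hom_nonzero_on K V \<Delta> (Suc p)"
  shows "red_hom_nonzero_on K V (deletion \<Delta> v) (Suc p) \<or> red_hom_nonzero_on K V (link \<Delta> v) p"
proof (rule ccontr)
  assume "\<not> ?thesis"
  then have deletion_exact: "\<And>c::'a set \<Rightarrow> 'k. is_chain (deletion \<Delta> v) (Suc p) c \<Longrightarrow>
      bdry V c = (\<lambda>_. 0) \<Longrightarrow> \<exists>b. is_chain (deletion \<Delta> v) (Suc (Suc p)) b \<and> bdry V b = c"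
    and link_exact: "\<And>c::'a set \<Rightarrow> 'k. is_chain (link \<Delta> v) p c \<Longrightarrow>
      bdry V c = (\<lambda>_. 0) \<Longrightarrow> \<exists>b. is_chain (link \<Delta> v) (Suc p) b \<and> bdry V b = c"
    unfolding red_hom_nonzero_on_def by blast+
  from H obtain z :: "'a set \<Rightarrow> 'k" where z: "is_chain \<Delta> (Suc p) z"
    and z_cycle: "bdry V z = (\<lambda>_. 0)"
    and z_not_bdry: "\<not> (\<exists>b. is_chain \<Delta> (Suc (Suc p)) b \<and> bdry V b = z)"
    unfolding red_hom_nonzero_on_def by blast
  have fin: "\<forall>\<sigma>\<in>\<Delta>. finite \<sigma>" using sub fV finite_subset by blast
  have zV: "\<forall>\<sigma>. z \<sigma> \<noteq> 0 \<longrightarrow> \<sigma> \<subseteq> V" by (rule is_chain_support[OF z sub])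
  have "bdry V (link_chain v z) = (\<lambda>_. 0)"
    using bdry_link_chain[OF fV zV, of v] z_cycle by (simp add: fun_eq_iff link_chain_def)
  then obtain b where b: "is_chain (link \<Delta> v) (Suc p) b" and bz: "bdry V b = link_chain v z"
    using link_exact[OF is_chain_link_chain[OF z fin]] by blast
  have coneV: "\<forall>\<sigma>. cone_chain v b \<sigma> \<noteq> 0 \<longrightarrow> \<sigma> \<subseteq> V"
    by (rule is_chain_support[OF is_chain_cone_chain[OF b fin] sub])
  define y where "y \<sigma> = z \<sigma> + bdry V (cone_chain v b) \<sigma>" for \<sigma>
  have "bdry V y = (\<lambda>_. 0)"
    unfolding y_def bdry_add using z_cycle bdry_bdry[OF fV coneV] by simp
  then obtain d where d: "is_chain (deletion \<Delta> v) (Suc (Suc p)) d" and dy: "bdry V d = y"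
    using deletion_exact is_chain_deletion_cycle_plus_cone[OF fV vV sub closed z b bz]
    unfolding y_def by blast
  have "deletion \<Delta> v \<subseteq> \<Delta>" by (auto simp: deletion_def)
  then have "is_chain \<Delta> (Suc (Suc p)) (\<lambda>\<sigma>. d \<sigma> - cone_chain v b \<sigma>)"
    using is_chain_diff is_chain_mono[OF d] is_chain_cone_chain[OF b fin] by blast
  moreover have "bdry V (\<lambda>\<sigma>. d \<sigma> - cone_chain v b \<sigma>) = z"
    unfolding bdry_diff dy by (simp add: y_def)
  ultimately show False using z_not_bdry by blast
qed

text \<open>If the link of \<open>x\<close> lies in that of \<open>y\<close>, the two cones over a cycle of that link glue
  to a cycle of \<open>\<Delta>\<close> (a suspension), and taking its link chain at \<open>x\<close> shows it does not bound.\<close>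

lemma red_hom_nonzero_on_suspension:
  fixes K :: "'k::field itself"
  assumes fV: "finite V" and sub: "\<Delta> \<subseteq> Pow V" and xV: "x \<in> V" and yV: "y \<in> V"
    and xy: "x \<noteq> y" and twin: "link \<Delta> x \<subseteq> link \<Delta> y"
    and H: "red_hom_nonzero_on K V (link \<Delta> x) q"
  shows "red_hom_nonzero_on K V \<Delta> (Suc q)"
proof -
  from H obtain z :: "'a set \<Rightarrow> 'k" where z: "is_chain (link \<Delta> x) q z"
    and z_cycle: "bdry V z = (\<lambda>_. 0)"
    and z_not_bdry: "\<not> (\<exists>b. is_chain (link \<Delta> x) (Suc q) b \<and> bdry V b = z)"
    unfolding red_hom_nonzero_on_def by blast
  have fin: "\<forall>\<sigma>\<in>\<Delta>. finite \<sigma>" using sub fV finite_subset by blast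
  have zV: "\<forall>\<sigma>. z \<sigma> \<noteq> 0 \<longrightarrow> \<sigma> \<subseteq> V" using z sub by (auto simp: is_chain_def link_def)
  have zx: "\<forall>\<sigma>. z \<sigma> \<noteq> 0 \<longrightarrow> x \<notin> \<sigma>" using z by (auto simp: is_chain_def link_def)
  have zy: "\<forall>\<sigma>. z \<sigma> \<noteq> 0 \<longrightarrow> y \<notin> \<sigma>" using z twin by (auto simp: is_chain_def link_def)
  define Z where "Z \<sigma> = cone_chain y z \<sigma> - cone_chain x z \<sigma>" for \<sigma>
  have Z: "is_chain \<Delta> (Suc q) Z"
    unfolding Z_def
    by (rule is_chain_diff[OF is_chain_cone_chain[OF is_chain_mono[OF z twin] fin]
          is_chain_cone_chain[OF z fin]])
  have Z_cycle: "bdry V Z = (\<lambda>_. 0)"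
    unfolding Z_def bdry_diff
    by (simp add: bdry_cone_chain_cycle[OF fV xV zx zV z_cycle] bdry_cone_chain_cycle[OF fV yV zy zV z_cycle])
  have "\<not> (\<exists>B. is_chain \<Delta> (Suc (Suc q)) B \<and> bdry V B = Z)"
  proof
    assume "\<exists>B. is_chain \<Delta> (Suc (Suc q)) B \<and> bdry V B = Z"
    then obtain B where B: "is_chain \<Delta> (Suc (Suc q)) B" and BZ: "bdry V B = Z" by blast
    have "link_chain x Z = (\<lambda>\<sigma>. - z \<sigma>)"
      unfolding Z_def link_chain_diff link_chain_cone_chain[OF zx]
        link_chain_cone_chain_other[OF xy zx] by simp
    then have "bdry V (link_chain x B) = z"
      using bdry_link_chain[OF fV is_chain_support[OF B sub]] BZ by simp
    then show False using z_not_bdry is_chain_link_chain[OF B fin] by blast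
  qed
  then show ?thesis unfolding red_hom_nonzero_on_def using Z Z_cycle by blast
qed

lemma bd_eq_bdry:
  fixes c :: "'a::linorder set \<Rightarrow> 'k::field"
  assumes c: "is_chain \<Delta> q c" and fV: "finite V" and U: "\<Union>\<Delta> \<subseteq> V"
  shows "bd \<Delta> c = bdry V c"
proof
  fix \<tau>
  have "bd \<Delta> c \<tau> = (\<Sum>v\<in>\<Union>\<Delta> - \<tau>. incidence_sign \<tau> v * c (insert v \<tau>))"
    by (simp add: bd_def incidence_sign_def)
  also have "\<dots> = (\<Sum>v\<in>V - \<tau>. incidence_sign \<tau> v * c (insert v \<tau>))"
  proof (rule sum.mono_neutral_left)
    show "finite (V - \<tau>)" using fV by simp
    show "\<Union>\<Delta> - \<tau> \<subseteq> V - \<tau>" using U by blast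
    show "\<forall>v\<in>V - \<tau> - (\<Union>\<Delta> - \<tau>). incidence_sign \<tau> v * c (insert v \<tau>) = 0"
      using c by (auto simp: is_chain_def)
  qed
  finally show "bd \<Delta> c \<tau> = bdry V c \<tau>" by (simp add: bdry_def)
qed

lemma red_hom_nonzero_iff_on:
  fixes K :: "'k::field itself"
  assumes "finite V" and "\<Union>\<Delta> \<subseteq> V"
  shows "red_hom_nonzero K \<Delta> q \<longleftrightarrow> red_hom_nonzero_on K V \<Delta> q"
proof -
  have "(is_chain \<Delta> q c \<and> bd \<Delta> c = (\<lambda>_. 0) \<and>
      \<not> (\<exists>b. is_chain \<Delta> (Suc q) b \<and> bd \<Delta> b = c)) \<longleftrightarrow>
    (is_chain \<Delta> q c \<and> bdry V c = (\<lambda>_. 0) \<and>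
      \<not> (\<exists>b. is_chain \<Delta> (Suc q) b \<and> bdry V b = c))" for c :: "'a set \<Rightarrow> 'k"
  proof (cases "is_chain \<Delta> q c")
    case True
    moreover have "\<forall>b. is_chain \<Delta> (Suc q) b \<longrightarrow> bd \<Delta> b = bdry V b"
      using bd_eq_bdry assms by blast
    ultimately show ?thesis using bd_eq_bdry[OF True assms] by auto
  qed simp
  then show ?thesis
    unfolding red_hom_nonzero_def red_hom_nonzero_on_def by blast
qed

lemma red_hom_nonzero_deletion_or_link:
  fixes K :: "'k::field itself" and \<Delta> :: "'a::linorder set set"
  assumes fin: "finite (\<Union>\<Delta>)" and closed: "\<forall>\<sigma>\<in>\<Delta>. \<forall>\<rho>\<subseteq>\<sigma>. \<rho> \<in> \<Delta>"
    and H: "red_hom_nonzero K \<Delta> (Suc p)"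
  shows "red_hom_nonzero K (deletion \<Delta> v) (Suc p) \<or> red_hom_nonzero K (link \<Delta> v) p"
proof -
  define V where "V = insert v (\<Union>\<Delta>)"
  have fV: "finite V" and sub: "\<Delta> \<subseteq> Pow V" using fin by (auto simp: V_def)
  have "\<Union>(deletion \<Delta> v) \<subseteq> V" "\<Union>(link \<Delta> v) \<subseteq> V" "\<Union>\<Delta> \<subseteq> V"
    by (auto simp: V_def deletion_def link_def)
  moreover have "v \<in> V" by (simp add: V_def)
  ultimately show ?thesis
    using red_hom_nonzero_on_deletion_or_link[OF fV _ sub closed] H
    by (simp add: red_hom_nonzero_iff_on[OF fV])
qed

lemma red_hom_nonzero_suspension:
  fixes K :: "'k::field itself" and \<Delta> :: "'a::linorder set set"
  assumes fin: "finite (\<Union>\<Delta>)" and "x \<noteq> y" and "link \<Delta> x \<subseteq> link \<Delta> y"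
    and H: "red_hom_nonzero K (link \<Delta> x) q"
  shows "red_hom_nonzero K \<Delta> (Suc q)"
proof -
  define V where "V = insert x (insert y (\<Union>\<Delta>))"
  have fV: "finite V" and sub: "\<Delta> \<subseteq> Pow V" using fin by (auto simp: V_def)
  have "\<Union>(link \<Delta> x) \<subseteq> V" "\<Union>\<Delta> \<subseteq> V" "x \<in> V" "y \<in> V"
    by (auto simp: V_def link_def)
  then show ?thesis
    using red_hom_nonzero_on_suspension[OF fV sub _ _ assms(2,3)] H
    by (simp add: red_hom_nonzero_iff_on[OF fV])
qed

section \<open>Independence complexes and regularity\<close>

lemma nbhd_subset: "nbhd G v \<subseteq> fst G"
  by (auto simp: nbhd_def)

lemma ind_complex_downward_closed: "\<forall>\<sigma>\<in>ind_complex G S. \<forall>\<rho>\<subseteq>\<sigma>. \<rho> \<in> ind_complex G S"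
  unfolding ind_complex_def by blast

lemma finite_Union_ind_complex: "finite S \<Longrightarrow> finite (\<Union>(ind_complex G S))"
  unfolding ind_complex_def by (auto intro: finite_subset)

lemma deletion_ind_complex: "deletion (ind_complex G S) v = ind_complex G (S - {v})"
  by (auto simp: deletion_def ind_complex_def)

lemma link_ind_complex:
  assumes G: "simple_graph G" and "v \<in> S"
  shows "link (ind_complex G S) v = ind_complex G (S - insert v (nbhd G v))"
proof (intro set_eqI iffI)
  fix \<sigma> assume "\<sigma> \<in> link (ind_complex G S) v"
  then have \<sigma>: "v \<notin> \<sigma>" "insert v \<sigma> \<subseteq> S" "\<forall>e\<in>snd G. \<not> e \<subseteq> insert v \<sigma>"
    by (auto simp: link_def ind_complex_def)
  then have "z \<notin> nbhd G v" if "z \<in> \<sigma>" for z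
    using that by (auto simp: nbhd_def)
  with \<sigma> show "\<sigma> \<in> ind_complex G (S - insert v (nbhd G v))"
    by (auto simp: ind_complex_def)
next
  fix \<sigma> assume "\<sigma> \<in> ind_complex G (S - insert v (nbhd G v))"
  then have \<sigma>: "\<sigma> \<subseteq> S" "v \<notin> \<sigma>" "\<sigma> \<inter> nbhd G v = {}" "\<forall>e\<in>snd G. \<not> e \<subseteq> \<sigma>"
    by (auto simp: ind_complex_def)
  have "\<not> e \<subseteq> insert v \<sigma>" if e: "e \<in> snd G" for e
  proof
    assume sub: "e \<subseteq> insert v \<sigma>"
    with \<sigma>(4) e have "v \<in> e" by blast
    moreover have "card e = 2" "e \<subseteq> fst G" using G e by (auto simp: simple_graph_def)
    ultimately obtain z where z: "e = {v, z}" "z \<noteq> v" "z \<in> fst G"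
      by (auto simp: card_2_iff)
    then have "z \<in> \<sigma> \<inter> nbhd G v" using sub e by (auto simp: nbhd_def)
    with \<sigma>(3) show False by blast
  qed
  then show "\<sigma> \<in> link (ind_complex G S) v"
    using \<sigma> \<open>v \<in> S\<close> by (auto simp: link_def ind_complex_def)
qed

lemma red_hom_nonzero_ind_complex_deletion_or_link:
  fixes K :: "'k::field itself" and G :: "'a::linorder graph"
  assumes "simple_graph G" and "finite S" and "v \<in> S"
    and "red_hom_nonzero K (ind_complex G S) (Suc p)"
  shows "red_hom_nonzero K (ind_complex G (S - {v})) (Suc p) \<or>
    red_hom_nonzero K (ind_complex G (S - insert v (nbhd G v))) p"
  using red_hom_nonzero_deletion_or_link[OF finite_Union_ind_complex[OF assms(2)]
      ind_complex_downward_closed assms(4), of v]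
  by (simp add: deletion_ind_complex link_ind_complex[OF assms(1,3)])

lemma red_hom_nonzero_ind_complex_suspension:
  fixes K :: "'k::field itself" and G :: "'a::linorder graph"
  assumes G: "simple_graph G" and xy: "{x, y} \<in> snd G" and "finite W"
    and W: "x \<notin> W" "y \<notin> W" "W \<inter> nbhd G x = {}" "W \<inter> nbhd G y = {}"
    and H: "red_hom_nonzero K (ind_complex G W) q"
  shows "red_hom_nonzero K (ind_complex G (insert x (insert y W))) (Suc q)"
proof -
  let ?U = "insert x (insert y W)"
  have "card {x, y} = 2" "{x, y} \<subseteq> fst G" using G xy by (auto simp: simple_graph_def)
  then have "x \<noteq> y" "y \<in> nbhd G x" "x \<in> nbhd G y"
    using xy by (auto simp: nbhd_def insert_commute)
  then have "?U - insert x (nbhd G x) = W" "?U - insert y (nbhd G y) = W" using W by auto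
  then have links: "link (ind_complex G ?U) x = ind_complex G W"
    "link (ind_complex G ?U) y = ind_complex G W"
    using link_ind_complex[OF G] by auto
  have "finite ?U" using \<open>finite W\<close> by simp
  from red_hom_nonzero_suspension[OF finite_Union_ind_complex[OF this, of G] \<open>x \<noteq> y\<close>]
  show ?thesis using H by (simp add: links)
qed

lemma red_hom_nonzero_le_card:
  fixes K :: "'k::field itself"
  assumes "finite S" and "\<Delta> \<subseteq> Pow S" and "red_hom_nonzero K \<Delta> j"
  shows "j \<le> card S"
proof (rule ccontr)
  assume "\<not> j \<le> card S"
  from assms(3) obtain c :: "'a set \<Rightarrow> 'k" where c: "is_chain \<Delta> j c"
    and not_bdry: "\<not> (\<exists>b. is_chain \<Delta> (Suc j) b \<and> bd \<Delta> b = c)"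
    unfolding red_hom_nonzero_def by blast
  have "c \<sigma> = 0" for \<sigma>
  proof (rule ccontr)
    assume "c \<sigma> \<noteq> 0"
    then have "\<sigma> \<subseteq> S" "card \<sigma> = j" using c assms(2) by (auto simp: is_chain_def)
    with \<open>\<not> j \<le> card S\<close> show False using assms(1) card_mono by blast
  qed
  then have "is_chain \<Delta> (Suc j) (\<lambda>_. 0) \<and> bd \<Delta> (\<lambda>_. 0) = c"
    by (simp add: is_chain_def bd_def fun_eq_iff)
  with not_bdry show False by blast
qed

lemma finite_reg_degrees:
  fixes K :: "'k::field itself" and G :: "'a::linorder graph"
  assumes "finite (fst G)"
  shows "finite {j. \<exists>S\<subseteq>fst G. red_hom_nonzero K (ind_complex G S) j}"
proof -
  have "j \<le> card (fst G)" if S: "S \<subseteq> fst G" and H: "red_hom_nonzero K (ind_complex G S) j" for S j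
  proof -
    have "finite S" using S assms finite_subset by blast
    moreover have "ind_complex G S \<subseteq> Pow S" by (auto simp: ind_complex_def)
    ultimately have "j \<le> card S" by (rule red_hom_nonzero_le_card[OF _ _ H])
    also have "\<dots> \<le> card (fst G)" by (rule card_mono[OF assms S])
    finally show ?thesis .
  qed
  then have "{j. \<exists>S\<subseteq>fst G. red_hom_nonzero K (ind_complex G S) j} \<subseteq> {..card (fst G)}" by auto
  then show ?thesis by (rule finite_subset) simp
qed

lemma le_reg:
  fixes K :: "'k::field itself" and G :: "'a::linorder graph"
  assumes "finite (fst G)" and "S \<subseteq> fst G" and "red_hom_nonzero K (ind_complex G S) j"
  shows "j \<le> reg K G"
proof -
  have "j \<in> {j. \<exists>S\<subseteq>fst G. red_hom_nonzero K (ind_complex G S) j}" using assms(2,3) by blast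
  then show ?thesis unfolding reg_def by (rule Max_ge[OF finite_reg_degrees[OF assms(1)]])
qed

text \<open>The empty induced subgraph contributes \<open>H\<^sub>-\<^sub>1(Ind(G[\<emptyset>])) \<noteq> 0\<close>, so the maximum
  defining \<open>reg\<close> is over a nonempty set.\<close>

lemma red_hom_nonzero_ind_complex_empty:
  fixes K :: "'k::field itself" and G :: "'a::linorder graph"
  assumes "{} \<notin> snd G"
  shows "red_hom_nonzero K (ind_complex G {}) 0"
proof -
  have empty: "ind_complex G {} = {{}}" using assms by (auto simp: ind_complex_def)
  define c :: "'a set \<Rightarrow> 'k" where "c \<sigma> = (if \<sigma> = {} then 1 else 0)" for \<sigma>
  have "is_chain {{}} 0 c" "bd {{}} c = (\<lambda>_. 0)"
    by (auto simp: is_chain_def bd_def c_def)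
  moreover have "\<not> (\<exists>b. is_chain {{}} (Suc 0) b \<and> bd {{}} b = c)"
    by (auto simp: bd_def c_def fun_eq_iff)
  ultimately show ?thesis unfolding red_hom_nonzero_def empty by blast
qed

lemma reg_le:
  fixes K :: "'k::field itself" and G :: "'a::linorder graph"
  assumes "finite (fst G)" and "{} \<notin> snd G"
    and bound: "\<And>S j. S \<subseteq> fst G \<Longrightarrow> red_hom_nonzero K (ind_complex G S) j \<Longrightarrow> j \<le> m"
  shows "reg K G \<le> m"
proof -
  have "0 \<in> {j. \<exists>S\<subseteq>fst G. red_hom_nonzero K (ind_complex G S) j}"
    using red_hom_nonzero_ind_complex_empty[OF assms(2)] by blast
  then show ?thesis
    unfolding reg_def using bound by (intro Max.boundedI[OF finite_reg_degrees[OF assms(1)]]) auto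
qed

section \<open>Edge contraction\<close>

locale edge_contraction =
  fixes G :: "'a::linorder graph" and x y w :: 'a
  assumes simple: "simple_graph G" and valid: "valid_contraction G x y w"
begin

abbreviation G' :: "'a graph" where "G' \<equiv> contract G x y w"

lemma edge: "{x, y} \<in> snd G" and w_fresh: "w \<notin> fst G - {x, y}"
  using valid by (auto simp: valid_contraction_def)

lemma finite_vertices: "finite (fst G)" and endpoints: "x \<in> fst G" "y \<in> fst G"
  using simple edge by (auto simp: simple_graph_def)

lemma vertices_contract: "fst G' = insert w (fst G - {x, y})"
  by (simp add: contract_def)

lemma edges_contract:
  "snd G' = {e \<in> snd G. x \<notin> e \<and> y \<notin> e} \<union> {{w, z} | z. z \<in> (nbhd G x \<union> nbhd G y) - {x, y}}"
  by (simp add: contract_def)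

lemma simple_contract: "simple_graph G'"
  unfolding simple_graph_def
proof
  show "finite (fst G')" using finite_vertices by (simp add: vertices_contract)
  show "\<forall>e\<in>snd G'. card e = 2 \<and> e \<subseteq> fst G'"
  proof
    fix e assume "e \<in> snd G'"
    then consider (old) "e \<in> snd G" "x \<notin> e" "y \<notin> e"
      | (new) z where "e = {w, z}" "z \<in> (nbhd G x \<union> nbhd G y) - {x, y}"
      unfolding edges_contract by blast
    then show "card e = 2 \<and> e \<subseteq> fst G'"
    proof cases
      case old
      then show ?thesis using simple by (auto simp: simple_graph_def vertices_contract)
    next
      case new
      then have "z \<in> fst G - {x, y}" "z \<noteq> w" using nbhd_subset[of G] w_fresh by blast+
      then show ?thesis using new by (auto simp: vertices_contract)
    qed
  qed
qed

lemma ind_complex_contract: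
  assumes T: "T \<subseteq> fst G - {x, y}"
  shows "ind_complex G' T = ind_complex G T"
proof -
  have "w \<notin> T" using T w_fresh by blast
  have "(\<forall>e\<in>snd G'. \<not> e \<subseteq> \<sigma>) \<longleftrightarrow> (\<forall>e\<in>snd G. \<not> e \<subseteq> \<sigma>)" if "\<sigma> \<subseteq> T" for \<sigma>
    using that T \<open>w \<notin> T\<close> unfolding edges_contract by blast
  then show ?thesis unfolding ind_complex_def by blast
qed

lemma nbhd_contract:
  assumes "z \<in> fst G - {x, y}" and "z \<in> nbhd G x \<union> nbhd G y"
  shows "z \<in> nbhd G' w"
  using assms by (auto simp: nbhd_def vertices_contract edges_contract)

lemma le_reg_contract_of_avoiding:
  assumes "T \<subseteq> fst G - {x, y}" and "red_hom_nonzero K (ind_complex G T) j"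
  shows "j \<le> reg K G'"
proof (rule le_reg)
  show "finite (fst G')" using simple_contract by (simp add: simple_graph_def)
  show "T \<subseteq> fst G'" using assms(1) by (auto simp: vertices_contract)
  show "red_hom_nonzero K (ind_complex G' T) j" using assms by (simp add: ind_complex_contract)
qed

lemma le_reg_of_contract_avoiding:
  assumes "T \<subseteq> fst G - {x, y}" and "red_hom_nonzero K (ind_complex G' T) j"
  shows "j \<le> reg K G"
proof (rule le_reg[OF finite_vertices])
  show "T \<subseteq> fst G" using assms(1) by blast
  show "red_hom_nonzero K (ind_complex G T) j" using assms by (simp add: ind_complex_contract)
qed

lemma Suc_le_reg_of_link_contract:
  assumes S: "S \<subseteq> fst G'" and H: "red_hom_nonzero K (ind_complex G' (S - insert w (nbhd G' w))) p"
  shows "Suc p \<le> reg K G"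
proof -
  define W where "W = S - insert w (nbhd G' w)"
  have W: "W \<subseteq> fst G - {x, y}" "W \<inter> nbhd G x = {}" "W \<inter> nbhd G y = {}"
    using S nbhd_contract by (auto simp: W_def vertices_contract)
  moreover have "finite W" "x \<notin> W" "y \<notin> W"
    using W(1) finite_vertices finite_subset by auto
  moreover have "red_hom_nonzero K (ind_complex G W) p"
    using H W(1) by (simp add: W_def ind_complex_contract)
  ultimately have "red_hom_nonzero K (ind_complex G (insert x (insert y W))) (Suc p)"
    using red_hom_nonzero_ind_complex_suspension[OF simple edge] by blast
  moreover have "insert x (insert y W) \<subseteq> fst G" using W endpoints by blast
  ultimately show ?thesis by (rule le_reg[OF finite_vertices, rotated])
qed

lemma reg_contract_le: "reg K G' \<le> reg K G"
proof (rule reg_le)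
  show "finite (fst G')" "{} \<notin> snd G'" using simple_contract by (auto simp: simple_graph_def)
  fix S j assume S: "S \<subseteq> fst G'" and H: "red_hom_nonzero K (ind_complex G' S) j"
  have S_w: "S - {w} \<subseteq> fst G - {x, y}" using S by (auto simp: vertices_contract)
  show "j \<le> reg K G"
  proof (cases "w \<in> S")
    case False
    then show ?thesis using S_w H le_reg_of_contract_avoiding[of S] by simp
  next
    case True
    show ?thesis
    proof (cases j)
      case (Suc p)
      have "finite S" using S simple_contract finite_subset by (auto simp: simple_graph_def)
      then show ?thesis
        using red_hom_nonzero_ind_complex_deletion_or_link[OF simple_contract _ True] H Suc
          le_reg_of_contract_avoiding[OF S_w] Suc_le_reg_of_link_contract[OF S] by blast
    qed simp
  qed
qed

lemma le_reg_contract_Suc: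
  assumes S: "S \<subseteq> fst G" and "x \<notin> S" and H: "red_hom_nonzero K (ind_complex G S) j"
  shows "j \<le> reg K G' + 1"
proof (cases "y \<in> S")
  case False
  then show ?thesis using assms le_reg_contract_of_avoiding[of S] by fastforce
next
  case True
  show ?thesis
  proof (cases j)
    case (Suc p)
    have "x \<in> nbhd G y" using edge endpoints by (simp add: nbhd_def insert_commute)
    moreover have "finite S" using S finite_vertices finite_subset by blast
    ultimately show ?thesis
      using red_hom_nonzero_ind_complex_deletion_or_link[OF simple _ True] H Suc
        le_reg_contract_of_avoiding[of "S - {y}" K "Suc p"]
        le_reg_contract_of_avoiding[of "S - insert y (nbhd G y)" K p] S \<open>x \<notin> S\<close> by fastforce
  qed simp
qed

lemma reg_le_reg_contract_Suc: "reg K G \<le> reg K G' + 1"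
proof (rule reg_le)
  show "finite (fst G)" "{} \<notin> snd G" using simple by (auto simp: simple_graph_def)
  fix S j assume S: "S \<subseteq> fst G" and H: "red_hom_nonzero K (ind_complex G S) j"
  show "j \<le> reg K G' + 1"
  proof (cases "x \<in> S")
    case False
    then show ?thesis using le_reg_contract_Suc[OF S _ H] by blast
  next
    case True
    show ?thesis
    proof (cases j)
      case (Suc p)
      have "y \<in> nbhd G x" using edge endpoints by (simp add: nbhd_def)
      moreover have "finite S" using S finite_vertices finite_subset by blast
      ultimately show ?thesis
        using red_hom_nonzero_ind_complex_deletion_or_link[OF simple _ True] H Suc
          le_reg_contract_Suc[of "S - {x}" K "Suc p"]
          le_reg_contract_of_avoiding[of "S - insert x (nbhd G x)" K p] S by fastforce
    qed simp
  qed
qed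

end

lemma simple_graph_contr_seq:
  fixes G :: "'a::linorder graph"
  shows "contr_seq G H \<Longrightarrow> simple_graph G \<Longrightarrow> simple_graph H"
proof (induction rule: contr_seq.induct)
  case (step G H x y w)
  then interpret edge_contraction H x y w by unfold_locales blast+
  show ?case by (rule simple_contract)
qed

lemma reg_le_contr_seq:
  fixes K :: "'k::field itself" and G :: "'a::linorder graph"
  assumes "contr_seq G H" and "simple_graph G"
  shows "reg K H \<le> reg K G"
  using assms
proof (induction rule: contr_seq.induct)
  case (step G H x y w)
  then interpret edge_contraction H x y w
    using simple_graph_contr_seq by unfold_locales blast+
  show ?case using reg_contract_le[of K] step.IH step.prems by linarith
qed simp

theorem mainTheorem17:
  fixes G :: "'a::linorder graph" and K :: "'k::field itself"
  assumes "simple_graph G"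
  shows "(\<forall>x y w. valid_contraction G x y w \<longrightarrow>
            reg K (contract G x y w) \<le> reg K G \<and> reg K G \<le> reg K (contract G x y w) + 1)
       \<and> (\<forall>H. contr_seq G H \<longrightarrow> reg K H \<le> reg K G)"
proof (intro conjI allI impI)
  fix x y w assume "valid_contraction G x y w"
  with assms interpret edge_contraction G x y w by unfold_locales
  show "reg K (contract G x y w) \<le> reg K G" by (rule reg_contract_le)
  show "reg K G \<le> reg K (contract G x y w) + 1" by (rule reg_le_reg_contract_Suc)
next
  fix H assume "contr_seq G H"
  then show "reg K H \<le> reg K G" using assms by (rule reg_le_contr_seq)
qed

end
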